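(* Consider the uplink system described in the context and the problem $$\text{(P)}:\ \max\ \log\Big|\sum_{v=1}^U \mathbf G_v(\mathbf w_v)\mathbf Q_v\mathbf G_v^H(\mathbf w_v)+\mathbf I_M\Big|$$ over $\mathbf Q_v\in\mathbb C^{N_v\times N_v}$, $\mathbf Q_v\succeq\mathbf 0$, $\mathrm{tr}(\mathbf Q_v)\le P_v$, and $\mathbf w_v\in\mathbb R^{N_v}$ with $0\le w_{v,n}\le W_v$ and $w_{v,n}\ne w_{v,n'}$ for $n\neq n'$, for all $v\in\{1,\dots,U\}$. Suppose that for some user $u$ we have $L_u=1$. Let $\mathcal U'=\{1,\dots,U\}\setminus\{u\}$. Then (P) is equivalent (in the sense of having the same optimal objective value) to the problem $$\max\ \log\Big|\sum_{v\in\mathcal U'}\mathbf G_v(\mathbf w_v)\mathbf Q_v\mathbf G_v^H(\mathbf w_v)+MN_uP_u|\gamma_{u,1}|^2\mathbf a_{u,\mathrm R}(\beta_{u,1})\mathbf a_{u,\mathrm R}^H(\beta_{u,1})+\mathbf I_M\Big|$$ over $\mathbf Q_v\succeq\mathbf 0$, $\mathrm{tr}(\mathbf Q_v)\le P_v$, $0\le w_{v,n}\le W_v$, $w_{v,n}\ne w_{v,n'}$ ($n\ne n'$), for all $v\in\mathcal U'$.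
   Context: A base station (BS) has an $M$-antenna uniform linear array with spacing $d=\lambda/2$ ($\lambda$ the wavelength). User $v\in\{1,\dots,U\}$ has $N_v$ antennas at positions $w_{v,1},\dots,w_{v,N_v}\in[0,W_v]$ on a line, power budget $P_v>0$, and $L_v$ propagation paths to the BS with complex gains $\gamma_{v,l}$, angles of arrival $\beta_{v,l}\in[0,\pi]$ and angles of departure $\theta_{v,l}\in[0,\pi]$. Define $\mathbf a_{v,\mathrm R}(\beta)=\frac1{\sqrt M}[1,e^{-j\frac{2\pi}{\lambda}d\cos\beta},\dots,e^{-j\frac{2\pi}{\lambda}(M-1)d\cos\beta}]^T$, $\mathbf a_{v,\mathrm T}(\theta,\mathbf w_v)=\frac1{\sqrt{N_v}}[e^{-j\frac{2\pi}{\lambda}w_{v,1}\cos\theta},\dots,e^{-j\frac{2\pi}{\lambda}w_{v,N_v}\cos\theta}]^T$, $\boldsymbol\Gamma_v=\mathrm{diag}(\gamma_{v,1},\dots,\gamma_{v,L_v})$, $\mathbf A_{v,\mathrm R}=[\mathbf a_{v,\mathrm R}(\beta_{v,l})]_{l=1}^{L_v}\in\mathbb C^{M\times L_v}$, $\mathbf A_{v,\mathrm T}(\mathbf w_v)=[\mathbf a_{v,\mathrm T}(\theta_{v,l},\mathbf w_v)]_{l=1}^{L_v}\in\mathbb C^{N_v\times L_v}$, and the channel $\mathbf G_v(\mathbf w_v)=\sqrt{MN_v}\,\mathbf A_{v,\mathrm R}\boldsymbol\Gamma_v\mathbf A_{v,\mathrm T}^H(\mathbf w_v)$. $|\cdot|$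 denotes determinant. *)

theory Defs
  imports "HOL-Analysis.Analysis" "Jordan_Normal_Form.Matrix" "Jordan_Normal_Form.Determinant"
begin

definition herm :: "complex mat \<Rightarrow> complex mat" where
  "herm A = mat (dim_col A) (dim_row A) (\<lambda>(i,j). cnj (A $$ (j,i)))"

definition psd :: "nat \<Rightarrow> complex mat \<Rightarrow> bool" where
  "psd n Q \<longleftrightarrow> Q \<in> carrier_mat n n \<and> herm Q = Q \<and>
     (\<forall>x \<in> carrier_vec n. 0 \<le> Re (conjugate x \<bullet> (Q *\<^sub>v x)))"

definition mtrace :: "complex mat \<Rightarrow> complex" where
  "mtrace A = (\<Sum>i<dim_row A. A $$ (i,i))"

text \<open>Receive steering vector a_R(beta) (column, as M x 1 matrix), spacing d = lambda/2.\<close>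
definition aR :: "nat \<Rightarrow> real \<Rightarrow> real \<Rightarrow> complex mat" where
  "aR M lam \<beta> = mat M 1 (\<lambda>(k,_). complex_of_real (1 / sqrt (real M)) *
      cis (- (2 * pi / lam) * real k * (lam / 2) * cos \<beta>))"

definition AR :: "nat \<Rightarrow> real \<Rightarrow> nat \<Rightarrow> (nat \<Rightarrow> real) \<Rightarrow> complex mat" where
  "AR M lam L \<beta> = mat M L (\<lambda>(k,l). complex_of_real (1 / sqrt (real M)) *
      cis (- (2 * pi / lam) * real k * (lam / 2) * cos (\<beta> l)))"

definition AT :: "nat \<Rightarrow> real \<Rightarrow> nat \<Rightarrow> (nat \<Rightarrow> real) \<Rightarrow> real vec \<Rightarrow> complex mat" where
  "AT N lam L \<theta> w = mat N L (\<lambda>(n,l). complex_of_real (1 / sqrt (real N)) *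
      cis (- (2 * pi / lam) * (w $ n) * cos (\<theta> l)))"

definition Gam :: "nat \<Rightarrow> (nat \<Rightarrow> complex) \<Rightarrow> complex mat" where
  "Gam L g = mat L L (\<lambda>(i,j). if i = j then g i else 0)"

definition chan :: "nat \<Rightarrow> real \<Rightarrow> nat \<Rightarrow> nat \<Rightarrow> (nat \<Rightarrow> complex) \<Rightarrow> (nat \<Rightarrow> real)
    \<Rightarrow> (nat \<Rightarrow> real) \<Rightarrow> real vec \<Rightarrow> complex mat" where
  "chan M lam N L g \<beta> \<theta> w =
     complex_of_real (sqrt (real M * real N)) \<cdot>\<^sub>m (AR M lam L \<beta> * Gam L g * herm (AT N lam L \<theta> w))"

definition msum :: "nat \<Rightarrow> nat set \<Rightarrow> (nat \<Rightarrow> complex mat) \<Rightarrow> complex mat" where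
  "msum M S f = foldr (\<lambda>v acc. f v + acc) (sorted_list_of_set S) (0\<^sub>m M M)"

definition pos_ok :: "nat \<Rightarrow> real \<Rightarrow> real vec \<Rightarrow> bool" where
  "pos_ok N W w \<longleftrightarrow> w \<in> carrier_vec N \<and> (\<forall>n<N. 0 \<le> w $ n \<and> w $ n \<le> W) \<and>
     (\<forall>n<N. \<forall>n'<N. n \<noteq> n' \<longrightarrow> w $ n \<noteq> w $ n')"

definition cov_ok :: "nat \<Rightarrow> real \<Rightarrow> complex mat \<Rightarrow> bool" where
  "cov_ok N P Q \<longleftrightarrow> psd N Q \<and> Re (mtrace Q) \<le> P"

end

(*
  With a single path, the channel of user u is the rank-one matrix
  G_u = sqrt(M N_u) gamma_u a_R a_T^H, so its contribution to the received covariance is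
  M N_u |gamma_u|^2 (a_T^H Q_u a_T) a_R a_R^H.  Since a_T has unit norm, the scalar
  a_T^H Q_u a_T lies between 0 and tr Q_u <= P_u, and the value P_u is attained by the
  beamformer Q_u = P_u a_T a_T^H for any antenna positions.  Finally, for psd H the function
  t |-> det (I + H + t a_R a_R^H) is affine in t and positive for t >= 0, hence nondecreasing;
  so the optimum is unchanged when the contribution of user u is replaced by its value at P_u.
*)

theory Submission
  imports Defs
begin

unbundle no vec_syntax

lemma herm_carrier [simp]: "A \<in> carrier_mat m n \<Longrightarrow> herm A \<in> carrier_mat n m"
  unfolding herm_def by auto

lemma herm_dims [simp]: "dim_row (herm A) = dim_col A" "dim_col (herm A) = dim_row A"
  unfolding herm_def by auto

lemma herm_index [simp]: "i < dim_col A \<Longrightarrow> j < dim_row A \<Longrightarrow> herm A $$ (i,j) = cnj (A $$ (j,i))"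
  unfolding herm_def by auto

lemma herm_herm [simp]: "herm (herm A) = A"
  by (rule eq_matI) auto

lemma herm_mult:
  assumes "A \<in> carrier_mat m n" "B \<in> carrier_mat n p"
  shows "herm (A * B) = herm B * herm A"
  by (rule eq_matI) (use assms in \<open>auto simp: scalar_prod_def sum_conjugate mult.commute\<close>)

lemma herm_add:
  "A \<in> carrier_mat m n \<Longrightarrow> B \<in> carrier_mat m n \<Longrightarrow> herm (A + B) = herm A + herm B"
  by (rule eq_matI) auto

lemma herm_smult: "herm (c \<cdot>\<^sub>m A) = cnj c \<cdot>\<^sub>m herm A"
  by (rule eq_matI) auto

lemma herm_one [simp]: "herm (1\<^sub>m n) = 1\<^sub>m n"
  by (rule eq_matI) auto

lemma det_herm:
  assumes "A \<in> carrier_mat n n"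
  shows "det (herm A) = cnj (det A)"
proof -
  interpret cnj_hom: comm_ring_hom cnj by unfold_locales auto
  have "herm A = transpose_mat (map_mat cnj A)"
    using assms by (auto intro!: eq_matI)
  then show ?thesis
    using det_transpose[of "map_mat cnj A" n] assms by simp
qed

lemma det_hermitian_real:
  assumes "A \<in> carrier_mat n n" "herm A = A"
  shows "Im (det A) = 0"
  using det_herm[OF assms(1)] assms(2) by (metis Reals_cnj_iff complex_is_Real_iff)

lemma hermitian_iff:
  assumes "A \<in> carrier_mat n n"
  shows "herm A = A \<longleftrightarrow> (\<forall>i<n. \<forall>j<n. A $$ (j,i) = cnj (A $$ (i,j)))"
proof
  assume "herm A = A"
  then show "\<forall>i<n. \<forall>j<n. A $$ (j,i) = cnj (A $$ (i,j))"
    using assms by (metis carrier_matD herm_index)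
next
  assume sym: "\<forall>i<n. \<forall>j<n. A $$ (j,i) = cnj (A $$ (i,j))"
  show "herm A = A"
  proof (rule eq_matI)
    fix i j assume "i < dim_row A" "j < dim_col A"
    then show "herm A $$ (i,j) = A $$ (i,j)"
      using assms sym[rule_format, of j i] by simp
  qed (use assms in auto)
qed

section \<open>Quadratic forms and positive semidefinite matrices\<close>

definition quad_form :: "nat \<Rightarrow> complex mat \<Rightarrow> (nat \<Rightarrow> complex) \<Rightarrow> complex" where
  "quad_form n A x = (\<Sum>i<n. \<Sum>j<n. cnj (x i) * A $$ (i,j) * x j)"

lemma quad_form_cong:
  "(\<And>i. i < n \<Longrightarrow> x i = y i) \<Longrightarrow> quad_form n A x = quad_form n A y"
  unfolding quad_form_def by (intro sum.cong) auto

lemma scalar_prod_conjugate_eq_quad_form: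
  assumes "A \<in> carrier_mat n n" "x \<in> carrier_vec n"
  shows "conjugate x \<bullet> (A *\<^sub>v x) = quad_form n A (($) x)"
  using assms unfolding quad_form_def scalar_prod_def
  by (auto simp: sum_distrib_left mult.assoc lessThan_atLeast0 scalar_prod_def intro!: sum.cong)

lemma psd_iff_quad_form:
  "psd n A \<longleftrightarrow> A \<in> carrier_mat n n \<and> herm A = A \<and> (\<forall>x. 0 \<le> Re (quad_form n A x))"
proof -
  have "(\<forall>x\<in>carrier_vec n. 0 \<le> Re (conjugate x \<bullet> (A *\<^sub>v x))) \<longleftrightarrow> (\<forall>x. 0 \<le> Re (quad_form n A x))"
    if A: "A \<in> carrier_mat n n"
  proof
    assume "\<forall>x\<in>carrier_vec n. 0 \<le> Re (conjugate x \<bullet> (A *\<^sub>v x))"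
    then have "0 \<le> Re (quad_form n A (($) (vec n x)))" for x
      using scalar_prod_conjugate_eq_quad_form[OF A, of "vec n x"] vec_carrier by metis
    moreover have "quad_form n A (($) (vec n x)) = quad_form n A x" for x
      by (rule quad_form_cong) simp
    ultimately show "\<forall>x. 0 \<le> Re (quad_form n A x)" by simp
  qed (simp add: scalar_prod_conjugate_eq_quad_form[OF A])
  then show ?thesis
    unfolding psd_def by blast
qed

lemma quad_form_add:
  assumes "A \<in> carrier_mat n n" "B \<in> carrier_mat n n"
  shows "quad_form n (A + B) x = quad_form n A x + quad_form n B x"
  using assms unfolding quad_form_def by (simp add: sum.distrib[symmetric] algebra_simps)

lemma quad_form_smult:
  assumes "A \<in> carrier_mat n n"
  shows "quad_form n (c \<cdot>\<^sub>m A) x = c * quad_form n A x"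
  using assms unfolding quad_form_def by (simp add: sum_distrib_left algebra_simps)

lemma quad_form_one: "quad_form n (1\<^sub>m n) x = complex_of_real (\<Sum>i<n. (cmod (x i))\<^sup>2)"
proof -
  have "(\<Sum>j<n. cnj (x i) * 1\<^sub>m n $$ (i,j) * x j) = complex_of_real ((cmod (x i))\<^sup>2)"
    if "i < n" for i
    using that by (simp add: if_distrib if_distribR sum.delta cong: if_cong)
      (metis complex_norm_square mult.commute of_real_power)
  then show ?thesis
    unfolding quad_form_def by simp
qed

lemma quad_form_real:
  assumes "psd n A"
  shows "Im (quad_form n A x) = 0"
proof -
  have herm: "\<And>i j. i < n \<Longrightarrow> j < n \<Longrightarrow> A $$ (j,i) = cnj (A $$ (i,j))"
    using assms hermitian_iff unfolding psd_def by blast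
  have "cnj (quad_form n A x) = (\<Sum>i<n. \<Sum>j<n. x i * A $$ (j,i) * cnj (x j))"
    unfolding quad_form_def cnj_sum complex_cnj_mult complex_cnj_cnj
    by (intro sum.cong refl) (simp add: herm[symmetric])
  also have "\<dots> = quad_form n A x"
    unfolding quad_form_def by (subst sum.swap) (simp add: mult_ac)
  finally show ?thesis
    by (metis Reals_cnj_iff complex_is_Real_iff)
qed

lemma psd_carrier: "psd n A \<Longrightarrow> A \<in> carrier_mat n n"
  unfolding psd_def by blast

lemma psd_zero: "psd n (0\<^sub>m n n)"
  unfolding psd_iff_quad_form quad_form_def by (auto intro: eq_matI)

lemma psd_add:
  assumes "psd n A" "psd n B"
  shows "psd n (A + B)"
  using assms psd_carrier[OF assms(1)] psd_carrier[OF assms(2)]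
  unfolding psd_iff_quad_form by (auto simp: herm_add quad_form_add intro: add_nonneg_nonneg)

lemma psd_smult:
  assumes "psd n A" "0 \<le> c"
  shows "psd n (complex_of_real c \<cdot>\<^sub>m A)"
  using assms psd_carrier[OF assms(1)]
  unfolding psd_iff_quad_form by (auto simp: herm_smult quad_form_smult)

lemma psd_outer: "psd n (mat n n (\<lambda>(i,j). u i * cnj (u j)))"
  unfolding psd_iff_quad_form
proof (intro conjI allI)
  fix x
  define a where "a = (\<Sum>i<n. cnj (x i) * u i)"
  have "quad_form n (mat n n (\<lambda>(i,j). u i * cnj (u j))) x = a * cnj a"
    unfolding quad_form_def a_def cnj_sum sum_product by (intro sum.cong) (auto simp: mult_ac)
  then show "0 \<le> Re (quad_form n (mat n n (\<lambda>(i,j). u i * cnj (u j))) x)"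
    by (simp flip: complex_norm_square)
qed (auto intro: eq_matI)

lemma scalar_prod_conjugate_adjoint:
  assumes "G \<in> carrier_mat m n" "x \<in> carrier_vec m" "z \<in> carrier_vec n"
  shows "conjugate x \<bullet> (G *\<^sub>v z) = conjugate (herm G *\<^sub>v x) \<bullet> z"
proof -
  have "conjugate x \<bullet> (G *\<^sub>v z) = (\<Sum>i<m. \<Sum>k<n. G $$ (i,k) * cnj (x $ i) * z $ k)"
    using assms by (simp add: scalar_prod_def lessThan_atLeast0 sum_distrib_left algebra_simps)
  also have "\<dots> = (\<Sum>k<n. \<Sum>i<m. G $$ (i,k) * cnj (x $ i) * z $ k)"
    by (rule sum.swap)
  also have "\<dots> = conjugate (herm G *\<^sub>v x) \<bullet> z"
    using assms by (simp add: scalar_prod_def lessThan_atLeast0 sum_distrib_right)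
  finally show ?thesis .
qed

lemma psd_congruence:
  assumes G: "G \<in> carrier_mat m n" and Q: "psd n Q"
  shows "psd m (G * Q * herm G)"
proof -
  have cQ: "Q \<in> carrier_mat n n" and hQ: "herm Q = Q"
    and nonneg: "\<And>x. x \<in> carrier_vec n \<Longrightarrow> 0 \<le> Re (conjugate x \<bullet> (Q *\<^sub>v x))"
    using Q unfolding psd_def by blast+
  have "herm (G * Q * herm G) = herm (herm G) * herm (G * Q)"
    using G cQ by (intro herm_mult) auto
  also have "\<dots> = G * (Q * herm G)"
    using G cQ hQ by (simp add: herm_mult[of G m n Q n])
  also have "\<dots> = G * Q * herm G"
    using G cQ by (simp add: assoc_mult_mat[of G m n Q n "herm G" m])
  finally have "herm (G * Q * herm G) = G * Q * herm G" .
  moreover have "0 \<le> Re (conjugate x \<bullet> ((G * Q * herm G) *\<^sub>v x))" if x: "x \<in> carrier_vec m" for x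
  proof -
    have y: "herm G *\<^sub>v x \<in> carrier_vec n"
      using G x by (metis herm_carrier mult_mat_vec_carrier)
    have "(G * Q * herm G) *\<^sub>v x = G *\<^sub>v (Q *\<^sub>v (herm G *\<^sub>v x))"
      using G cQ x y by (simp add: assoc_mult_mat_vec[of "G * Q" m n "herm G" m x]
          assoc_mult_mat_vec[of G m n Q n])
    then show ?thesis
      using scalar_prod_conjugate_adjoint[OF G x, of "Q *\<^sub>v (herm G *\<^sub>v x)"] cQ y nonneg by simp
  qed
  ultimately show ?thesis
    unfolding psd_def using G cQ by auto
qed

lemma sum_sum_delta:
  fixes f :: "nat \<Rightarrow> nat \<Rightarrow> 'a::comm_monoid_add"
  assumes "p < n" "q < n"
  shows "(\<Sum>k<n. \<Sum>l<n. if k = p then if l = q then f k l else 0 else 0) = f p q"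
proof -
  have "(\<Sum>l<n. if k = p then if l = q then f k l else 0 else 0) = (if k = p then f k q else 0)" for k
    using assms by (simp add: sum.delta)
  then show ?thesis
    using assms by (simp add: sum.delta)
qed

lemma quad_form_two_point:
  assumes "i < n" "j < n"
  shows "quad_form n A (\<lambda>k. (if k = i then a else 0) - (if k = j then b else 0)) =
    cnj a * a * A $$ (i,i) + cnj b * b * A $$ (j,j) - cnj a * b * A $$ (i,j) - cnj b * a * A $$ (j,i)"
proof -
  have "cnj ((if k = i then a else 0) - (if k = j then b else 0)) * A $$ (k,l)
          * ((if l = i then a else 0) - (if l = j then b else 0)) =
        (if k = i then if l = i then cnj a * a * A $$ (k,l) else 0 else 0)
      + (if k = j then if l = j then cnj b * b * A $$ (k,l) else 0 else 0)
      - (if k = i then if l = j then cnj a * b * A $$ (k,l) else 0 else 0)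
      - (if k = j then if l = i then cnj b * a * A $$ (k,l) else 0 else 0)" for k l
    by (auto simp: algebra_simps)
  then show ?thesis
    unfolding quad_form_def using assms by (simp add: sum.distrib sum_subtractf sum_sum_delta)
qed

lemma quad_form_le_trace:
  assumes Q: "psd n Q" and x: "(\<Sum>k<n. (cmod (x k))\<^sup>2) = 1"
  shows "Re (quad_form n Q x) \<le> Re (mtrace Q)"
proof -
  define z where "z i j = (\<lambda>k. (if k = i then cnj (x j) else 0) - (if k = j then cnj (x i) else 0))"
    for i j
  have norm: "(\<Sum>j<n. x j * cnj (x j)) = 1"
    using arg_cong[OF x, of complex_of_real] by (simp flip: complex_norm_square)
  have trace: "mtrace Q = (\<Sum>i<n. Q $$ (i,i))"
    using psd_carrier[OF Q] unfolding mtrace_def by simp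
  \<comment> \<open>a Lagrange-type identity: for unit \<open>x\<close> the forms of the vectors \<open>z i j\<close> add up to \<open>2 tr Q - 2 x\<^sup>H Q x\<close>\<close>
  have "(\<Sum>i<n. \<Sum>j<n. quad_form n Q (z i j)) =
      (\<Sum>i<n. \<Sum>j<n. x j * cnj (x j) * Q $$ (i,i)) + (\<Sum>i<n. \<Sum>j<n. x i * cnj (x i) * Q $$ (j,j))
      - (\<Sum>i<n. \<Sum>j<n. x j * cnj (x i) * Q $$ (i,j)) - (\<Sum>i<n. \<Sum>j<n. x i * cnj (x j) * Q $$ (j,i))"
    unfolding z_def by (simp add: quad_form_two_point sum.distrib sum_subtractf)
  also have "(\<Sum>i<n. \<Sum>j<n. x j * cnj (x j) * Q $$ (i,i)) = mtrace Q"
    unfolding trace by (simp add: sum_distrib_right[symmetric] norm)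
  also have "(\<Sum>i<n. \<Sum>j<n. x i * cnj (x i) * Q $$ (j,j)) = mtrace Q"
    unfolding trace by (simp add: sum_distrib_left[symmetric] sum_distrib_right[symmetric] norm)
  also have "(\<Sum>i<n. \<Sum>j<n. x j * cnj (x i) * Q $$ (i,j)) = quad_form n Q x"
    unfolding quad_form_def by (intro sum.cong refl) (simp add: mult_ac)
  also have "(\<Sum>i<n. \<Sum>j<n. x i * cnj (x j) * Q $$ (j,i)) = quad_form n Q x"
    unfolding quad_form_def by (subst sum.swap) (intro sum.cong refl, simp add: mult_ac)
  finally have identity:
    "(\<Sum>i<n. \<Sum>j<n. quad_form n Q (z i j)) = mtrace Q + mtrace Q - quad_form n Q x - quad_form n Q x" .
  have "0 \<le> (\<Sum>i<n. \<Sum>j<n. Re (quad_form n Q (z i j)))"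
    using Q unfolding psd_iff_quad_form by (auto intro: sum_nonneg)
  also have "\<dots> = Re (mtrace Q + mtrace Q - quad_form n Q x - quad_form n Q x)"
    unfolding identity[symmetric] by (simp add: Re_sum)
  finally show ?thesis by simp
qed

section \<open>Determinants of positive definite matrices and rank-one updates\<close>

lemma det_continuous_on:
  fixes F :: "'a::topological_space \<Rightarrow> 'b::real_normed_field mat"
  assumes "\<And>r. F r \<in> carrier_mat n n"
    and "\<And>i j. i < n \<Longrightarrow> j < n \<Longrightarrow> continuous_on S (\<lambda>r. F r $$ (i,j))"
  shows "continuous_on S (\<lambda>r. det (F r))"
proof -
  have expand: "(\<lambda>r. det (F r)) =
      (\<lambda>r. \<Sum>p \<in> {p. p permutes {0..<n}}. signof p * (\<Prod>i = 0..<n. F r $$ (i, p i)))"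
    using det_def'[OF assms(1)] by auto
  show ?thesis
    unfolding expand
  proof (intro continuous_on_sum continuous_on_mult continuous_on_const continuous_on_prod)
    fix p i assume "p \<in> {p. p permutes {0..<n}}" "i \<in> {0..<n}"
    then show "continuous_on S (\<lambda>r. F r $$ (i, p i))"
      using permutes_in_image[of p "{0..<n}" i] by (auto intro: assms(2))
  qed
qed

lemma det_one_plus_psd_nonzero:
  assumes H: "psd n H"
  shows "det (1\<^sub>m n + H) \<noteq> 0"
proof
  have cH: "H \<in> carrier_mat n n"
    using psd_carrier[OF H] .
  assume "det (1\<^sub>m n + H) = 0"
  then obtain v where v: "v \<in> carrier_vec n" "v \<noteq> 0\<^sub>v n" "(1\<^sub>m n + H) *\<^sub>v v = 0\<^sub>v n"
    using det_0_iff_vec_prod_zero[of "1\<^sub>m n + H" n] cH by auto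
  have "quad_form n (1\<^sub>m n + H) (($) v) = 0"
    using scalar_prod_conjugate_eq_quad_form[of "1\<^sub>m n + H" n v] v cH by simp
  then have "complex_of_real (\<Sum>i<n. (cmod (v $ i))\<^sup>2) + quad_form n H (($) v) = 0"
    by (simp only: quad_form_add[OF one_carrier_mat cH] quad_form_one)
  then have "(\<Sum>i<n. (cmod (v $ i))\<^sup>2) + Re (quad_form n H (($) v)) = 0"
    by (metis Re_complex_of_real plus_complex.sel(1) zero_complex.sel(1))
  moreover have "0 \<le> Re (quad_form n H (($) v))"
    using H unfolding psd_iff_quad_form by blast
  ultimately have "(\<Sum>i<n. (cmod (v $ i))\<^sup>2) = 0"
    by (simp add: add_nonneg_eq_0_iff sum_nonneg)
  then have "v = 0\<^sub>v n"
    using v(1) by (intro eq_vecI) (simp_all add: sum_nonneg_eq_0_iff)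
  with v(2) show False ..
qed

lemma det_one_plus_psd_real:
  assumes "psd n H"
  shows "Im (det (1\<^sub>m n + H)) = 0"
  using assms psd_carrier[OF assms] unfolding psd_def
  by (intro det_hermitian_real[of _ n]) (simp_all add: herm_add[OF one_carrier_mat])

lemma det_one_plus_psd_pos:
  assumes H: "psd n H"
  shows "0 < Re (det (1\<^sub>m n + H))"
proof (rule ccontr)
  assume not_pos: "\<not> 0 < Re (det (1\<^sub>m n + H))"
  have cH: "H \<in> carrier_mat n n"
    using psd_carrier[OF H] .
  \<comment> \<open>\<open>det (1 + r H)\<close> is real, continuous in \<open>r\<close>, equal to 1 at \<open>r = 0\<close> and never 0 for \<open>r \<ge> 0\<close>\<close>
  define g where "g r = Re (det (1\<^sub>m n + complex_of_real r \<cdot>\<^sub>m H))" for r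
  have cont: "continuous_on {0..1} g"
    unfolding g_def using cH
    by (intro continuous_intros det_continuous_on[where n = n]) (auto intro!: continuous_intros)
  have "1\<^sub>m n + complex_of_real 0 \<cdot>\<^sub>m H = 1\<^sub>m n"
    using cH by (intro eq_matI) auto
  then have g0: "g 0 = 1"
    unfolding g_def by simp
  have "1 \<cdot>\<^sub>m H = H"
    by (rule eq_matI) auto
  then have g1: "g 1 \<le> 0"
    using not_pos unfolding g_def by simp
  obtain r where r: "0 \<le> r" "r \<le> 1" "g r = 0"
    using IVT2'[of g 1 0 0] cont g0 g1 by auto
  have "psd n (complex_of_real r \<cdot>\<^sub>m H)"
    using psd_smult[OF H r(1)] .
  then show False
    using det_one_plus_psd_nonzero det_one_plus_psd_real r(3) unfolding g_def
    by (metis complex_eq_iff zero_complex.sel)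
qed

lemma det_eq_on_rows_but_one:
  fixes A B :: "'a::comm_ring_1 mat"
  assumes A: "A \<in> carrier_mat n n" and B: "B \<in> carrier_mat n n" and k: "k < n"
    and rows: "\<And>i j. i < n \<Longrightarrow> j < n \<Longrightarrow> i \<noteq> k \<Longrightarrow> B $$ (i,j) = A $$ (i,j)"
  shows "det B = det A + (\<Sum>j<n. (B $$ (k,j) - A $$ (k,j)) * cofactor A k j)"
proof -
  have "mat_delete B k j = mat_delete A k j" for j
    using A B k by (intro eq_matI) (auto simp: mat_delete_def insert_index_def intro!: rows)
  then have cofactor: "cofactor B k j = cofactor A k j" for j
    unfolding cofactor_def by simp
  have "det B = (\<Sum>j<n. B $$ (k,j) * cofactor B k j)"
    by (rule laplace_expansion_row[OF B k])
  also have "\<dots> = (\<Sum>j<n. A $$ (k,j) * cofactor A k j) + (\<Sum>j<n. (B $$ (k,j) - A $$ (k,j)) * cofactor A k j)"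
    by (simp add: cofactor sum.distrib[symmetric] algebra_simps)
  also have "(\<Sum>j<n. A $$ (k,j) * cofactor A k j) = det A"
    by (rule laplace_expansion_row[OF A k, symmetric])
  finally show ?thesis .
qed

lemma det_rank1_update_affine:
  fixes A :: "'a::field mat"
  assumes A: "A \<in> carrier_mat n n"
  obtains D where "\<And>t. det (A + t \<cdot>\<^sub>m mat n n (\<lambda>(i,j). u i * v j)) = det A + t * D"
proof (cases "\<forall>i<n. u i = 0")
  case True
  then have "A + t \<cdot>\<^sub>m mat n n (\<lambda>(i,j). u i * v j) = A" for t
    using A by (intro eq_matI) auto
  then show ?thesis
    using that[of 0] by simp
next
  case False
  then obtain k where k: "k < n" "u k \<noteq> 0" by auto
  define R where "R = mat n n (\<lambda>(i,j). u i * v j)"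
  \<comment> \<open>subtracting multiples of row \<open>k\<close> from the other rows moves the whole update into row \<open>k\<close>\<close>
  define E where "E = mat n n (\<lambda>(i,j). if i = j then 1 else if j = k then - u i / u k else 0)"
  have E: "E \<in> carrier_mat n n" and R: "R \<in> carrier_mat n n"
    unfolding E_def R_def by simp_all
  have "det E = 1"
  proof -
    have "det E = (\<Sum>j<n. E $$ (k,j) * cofactor E k j)"
      by (rule laplace_expansion_row[OF E k(1)])
    also have "\<dots> = (\<Sum>j<n. if j = k then cofactor E k j else 0)"
      by (intro sum.cong refl) (simp add: E_def k)
    also have "\<dots> = cofactor E k k"
      using k by simp
    also have "mat_delete E k k = 1\<^sub>m (n - 1)"
      by (rule eq_matI) (use k in \<open>auto simp: mat_delete_def E_def\<close>)
    then have "cofactor E k k = 1"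
      unfolding cofactor_def by (simp flip: power_add mult_2)
    finally show ?thesis .
  qed
  have E_mult: "(E * X) $$ (i,j) = X $$ (i,j) - (if i = k then 0 else u i / u k * X $$ (k,j))"
    if "X \<in> carrier_mat n n" "i < n" "j < n" for X i j
  proof -
    have "(E * X) $$ (i,j) = (\<Sum>l<n. E $$ (i,l) * X $$ (l,j))"
      using that E by (simp add: scalar_prod_def lessThan_atLeast0)
    also have "\<dots> = (\<Sum>l<n. (if l = i then X $$ (l,j) else 0)
                     - (if l = k \<and> i \<noteq> k then u i / u k * X $$ (l,j) else 0))"
      by (intro sum.cong) (auto simp: E_def that)
    also have "\<dots> = X $$ (i,j) - (if i = k then 0 else u i / u k * X $$ (k,j))"
      using that k by (simp add: sum_subtractf sum.delta)
    finally show ?thesis .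
  qed
  define D where "D = (\<Sum>j<n. u k * v j * cofactor (E * A) k j)"
  have "det (A + t \<cdot>\<^sub>m R) = det A + t * D" for t
  proof -
    have AR: "A + t \<cdot>\<^sub>m R \<in> carrier_mat n n"
      using A R by simp
    have entry: "(A + t \<cdot>\<^sub>m R) $$ (i,j) = A $$ (i,j) + t * (u i * v j)" if "i < n" "j < n" for i j
      using A that unfolding R_def by simp
    have "det (E * (A + t \<cdot>\<^sub>m R)) = det (E * A)
        + (\<Sum>j<n. ((E * (A + t \<cdot>\<^sub>m R)) $$ (k,j) - (E * A) $$ (k,j)) * cofactor (E * A) k j)"
    proof (rule det_eq_on_rows_but_one)
      fix i j assume "i < n" "j < n" "i \<noteq> k"
      then show "(E * (A + t \<cdot>\<^sub>m R)) $$ (i,j) = (E * A) $$ (i,j)"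
        using A AR k by (simp add: E_mult entry field_simps)
    qed (use A AR E k in auto)
    also have "\<dots> = det (E * A) + t * D"
      using A AR k unfolding D_def by (simp add: E_mult entry sum_distrib_left algebra_simps)
    finally show ?thesis
      using det_mult[OF E AR] det_mult[OF E A] \<open>det E = 1\<close> by simp
  qed
  then show ?thesis
    using that unfolding R_def by blast
qed

lemma det_rank1_update_mono:
  assumes H: "psd n H" and s: "0 \<le> s" "s \<le> t"
  shows "0 < Re (det (H + complex_of_real s \<cdot>\<^sub>m mat n n (\<lambda>(i,j). u i * cnj (u j)) + 1\<^sub>m n))"
    and "Re (det (H + complex_of_real s \<cdot>\<^sub>m mat n n (\<lambda>(i,j). u i * cnj (u j)) + 1\<^sub>m n))
      \<le> Re (det (H + complex_of_real t \<cdot>\<^sub>m mat n n (\<lambda>(i,j). u i * cnj (u j)) + 1\<^sub>m n))"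
proof -
  define R where "R = mat n n (\<lambda>(i,j). u i * cnj (u j))"
  have cH: "H \<in> carrier_mat n n" and cR: "R \<in> carrier_mat n n"
    using psd_carrier[OF H] unfolding R_def by auto
  obtain D where D: "\<And>c. det (1\<^sub>m n + H + c \<cdot>\<^sub>m R) = det (1\<^sub>m n + H) + c * D"
    using det_rank1_update_affine[of "1\<^sub>m n + H" n u "\<lambda>j. cnj (u j)"] cH unfolding R_def by auto
  have det_value: "Re (det (H + complex_of_real c \<cdot>\<^sub>m R + 1\<^sub>m n)) = Re (det (1\<^sub>m n + H)) + c * Re D" for c
  proof -
    have "H + complex_of_real c \<cdot>\<^sub>m R + 1\<^sub>m n = 1\<^sub>m n + H + complex_of_real c \<cdot>\<^sub>m R"
      using cH cR by (intro eq_matI) auto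
    then show ?thesis
      using D by simp
  qed
  have pos: "0 < Re (det (1\<^sub>m n + H)) + c * Re D" if "0 \<le> c" for c
  proof -
    have "psd n (H + complex_of_real c \<cdot>\<^sub>m R)"
      unfolding R_def using H that by (intro psd_add psd_smult psd_outer)
    then have "0 < Re (det (1\<^sub>m n + (H + complex_of_real c \<cdot>\<^sub>m R)))"
      by (rule det_one_plus_psd_pos)
    also have "1\<^sub>m n + (H + complex_of_real c \<cdot>\<^sub>m R) = H + complex_of_real c \<cdot>\<^sub>m R + 1\<^sub>m n"
      using cH cR by (intro eq_matI) auto
    finally show ?thesis
      using det_value by simp
  qed
  \<comment> \<open>an affine function of \<open>c\<close> that stays positive on \<open>c \<ge> 0\<close> has nonnegative slope\<close>
  have "0 \<le> Re D"
  proof (rule ccontr)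
    assume "\<not> 0 \<le> Re D"
    then have "Re (det (1\<^sub>m n + H)) + (Re (det (1\<^sub>m n + H)) / - Re D) * Re D = 0"
      by (simp add: field_simps)
    moreover have "0 \<le> Re (det (1\<^sub>m n + H)) / - Re D"
      using pos[of 0] \<open>\<not> 0 \<le> Re D\<close> by (intro divide_nonneg_pos) simp_all
    ultimately show False
      using pos by fastforce
  qed
  then show "0 < Re (det (H + complex_of_real s \<cdot>\<^sub>m R + 1\<^sub>m n))"
    and "Re (det (H + complex_of_real s \<cdot>\<^sub>m R + 1\<^sub>m n)) \<le> Re (det (H + complex_of_real t \<cdot>\<^sub>m R + 1\<^sub>m n))"
    using pos[OF s(1)] s by (simp_all add: det_value mult_right_mono)
qed

lemma foldr_plus_mat_index:
  assumes "\<And>v. v \<in> set xs \<Longrightarrow> f v \<in> carrier_mat n n"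
  shows "foldr (\<lambda>v acc. f v + acc) xs (0\<^sub>m n n) = mat n n (\<lambda>(i,j). \<Sum>v\<leftarrow>xs. f v $$ (i,j))"
  using assms
proof (induction xs)
  case Nil
  then show ?case by (auto intro: eq_matI)
next
  case (Cons x xs)
  then have "f x \<in> carrier_mat n n" by simp
  with Cons show ?case by (auto intro!: eq_matI)
qed

lemma msum_index:
  assumes "finite S" "\<And>v. v \<in> S \<Longrightarrow> f v \<in> carrier_mat n n"
  shows "msum n S f = mat n n (\<lambda>(i,j). \<Sum>v\<in>S. f v $$ (i,j))"
  unfolding msum_def using assms by (subst foldr_plus_mat_index) (auto simp: sum_list_distinct_conv_sum_set)

lemma msum_cong:
  "(\<And>v. v \<in> S \<Longrightarrow> f v = g v) \<Longrightarrow> finite S \<Longrightarrow> msum n S f = msum n S g"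
  unfolding msum_def by (intro foldr_cong) auto

lemma msum_remove:
  assumes "finite S" "u \<in> S" "\<And>v. v \<in> S \<Longrightarrow> f v \<in> carrier_mat n n"
  shows "msum n S f = msum n (S - {u}) f + f u"
proof -
  have "msum n (S - {u}) f = mat n n (\<lambda>(i,j). \<Sum>v\<in>S - {u}. f v $$ (i,j))"
    using assms by (intro msum_index) auto
  moreover have "msum n S f = mat n n (\<lambda>(i,j). \<Sum>v\<in>S. f v $$ (i,j))"
    using assms by (intro msum_index) auto
  moreover have "dim_row (f u) = n" "dim_col (f u) = n"
    using assms by auto
  ultimately show ?thesis
    using assms by (auto simp: sum.remove intro!: eq_matI)
qed

lemma psd_msum:
  assumes "finite S" "\<And>v. v \<in> S \<Longrightarrow> psd n (f v)"
  shows "psd n (msum n S f)"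
proof -
  have "psd n (foldr (\<lambda>v acc. f v + acc) xs (0\<^sub>m n n))" if "set xs \<subseteq> S" for xs
    using that assms(2) by (induction xs) (auto intro: psd_zero psd_add)
  then show ?thesis
    unfolding msum_def using assms(1) by simp
qed

section \<open>The uplink model\<close>

lemma chan_carrier [simp]: "chan M lam N L g \<beta> \<theta> w \<in> carrier_mat M N"
  unfolding carrier_mat_def chan_def by (simp add: AR_def Gam_def AT_def)

lemma chan_single_path_index:
  assumes "i < M" "k < N"
  shows "chan M lam N 1 g \<beta> \<theta> w $$ (i,k) = complex_of_real (sqrt (real M * real N))
    * (aR M lam (\<beta> 0) $$ (i,0) * g 0 * cnj (AT N lam 1 \<theta> w $$ (k,0)))"
  using assms unfolding chan_def by (simp add: AR_def Gam_def aR_def AT_def scalar_prod_def)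

lemma aR_outer:
  "aR M lam b * herm (aR M lam b) = mat M M (\<lambda>(i,j). aR M lam b $$ (i,0) * cnj (aR M lam b $$ (j,0)))"
  by (rule eq_matI) (auto simp: aR_def scalar_prod_def)

lemma chan_single_path_gram:
  assumes Q: "Q \<in> carrier_mat N N"
  shows "chan M lam N 1 g \<beta> \<theta> w * Q * herm (chan M lam N 1 g \<beta> \<theta> w) =
    (complex_of_real (real M * real N * (cmod (g 0))\<^sup>2) * quad_form N Q (\<lambda>k. AT N lam 1 \<theta> w $$ (k,0)))
      \<cdot>\<^sub>m (aR M lam (\<beta> 0) * herm (aR M lam (\<beta> 0)))"
proof -
  define G where "G = chan M lam N 1 g \<beta> \<theta> w"
  define a where "a i = aR M lam (\<beta> 0) $$ (i,0)" for i
  define t where "t k = AT N lam 1 \<theta> w $$ (k,0)" for k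
  define c where "c = complex_of_real (sqrt (real M * real N))"
  have G: "G \<in> carrier_mat M N"
    unfolding G_def by simp
  have G_index: "G $$ (i,k) = c * (a i * g 0 * cnj (t k))" if "i < M" "k < N" for i k
    unfolding G_def a_def t_def c_def using chan_single_path_index[OF that] .
  have c: "c * cnj c = complex_of_real (real M * real N)"
    unfolding c_def by (simp flip: of_real_mult)
  have g: "g 0 * cnj (g 0) = complex_of_real ((cmod (g 0))\<^sup>2)"
    by (rule complex_norm_square[symmetric])
  define B where "B = (complex_of_real (real M * real N * (cmod (g 0))\<^sup>2) * quad_form N Q t)
      \<cdot>\<^sub>m mat M M (\<lambda>(i,j). a i * cnj (a j))"
  have "G * Q * herm G = B"
  proof (rule eq_matI)
    fix i j assume "i < dim_row B" "j < dim_col B"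
    then have ij: "i < M" "j < M"
      unfolding B_def by simp_all
    have "(G * Q * herm G) $$ (i,j) = (\<Sum>l<N. (\<Sum>k<N. G $$ (i,k) * Q $$ (k,l)) * cnj (G $$ (j,l)))"
      using G Q ij by (simp add: scalar_prod_def lessThan_atLeast0)
    also have "\<dots> = (\<Sum>l<N. \<Sum>k<N. (c * cnj c) * (g 0 * cnj (g 0)) * (a i * cnj (a j))
        * (cnj (t k) * Q $$ (k,l) * t l))"
      by (intro sum.cong refl) (simp add: G_index ij sum_distrib_right sum_distrib_left mult_ac)
    also have "\<dots> = (c * cnj c) * (g 0 * cnj (g 0)) * (a i * cnj (a j)) * quad_form N Q t"
      unfolding quad_form_def by (subst sum.swap) (simp add: sum_distrib_left)
    also have "\<dots> = complex_of_real (real M * real N * (cmod (g 0))\<^sup>2) * quad_form N Q t * (a i * cnj (a j))"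
      unfolding c g by (simp only: of_real_mult mult_ac)
    finally show "(G * Q * herm G) $$ (i,j) = B $$ (i,j)"
      unfolding B_def using ij by simp
  qed (use G Q in \<open>auto simp: B_def\<close>)
  then show ?thesis
    unfolding G_def t_def a_def B_def aR_outer .
qed

lemma AT_column_norm:
  assumes "l < L" "1 \<le> N"
  shows "(\<Sum>k<N. (cmod (AT N lam L \<theta> w $$ (k,l)))\<^sup>2) = 1"
proof -
  have "(cmod (AT N lam L \<theta> w $$ (k,l)))\<^sup>2 = 1 / real N" if "k < N" for k
    using that assms by (simp add: AT_def norm_divide power_divide)
  then show ?thesis
    using assms by simp
qed

lemma pos_ok_uniform:
  assumes "0 < W" "1 \<le> N"
  shows "pos_ok N W (vec N (\<lambda>n. W * real n / real N))"
  unfolding pos_ok_def using assms by (auto simp: divide_le_eq)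

lemma Sup_eq_if_mutually_dominated:
  fixes A B :: "real set"
  assumes "\<And>x. x \<in> A \<Longrightarrow> \<exists>y\<in>B. x \<le> y" and "\<And>y. y \<in> B \<Longrightarrow> \<exists>x\<in>A. y \<le> x"
  shows "Sup A = Sup B"
proof -
  \<comment> \<open>no boundedness needed: \<open>Sup\<close> on \<open>real\<close> is defined from the set of upper bounds alone\<close>
  have "(\<forall>x\<in>A. x \<le> z) \<longleftrightarrow> (\<forall>x\<in>B. x \<le> z)" for z
    using assms by (meson order_trans)
  then show ?thesis
    unfolding Sup_real_def by simp
qed

locale uplink =
  fixes M :: nat and lam :: real and N L :: "nat \<Rightarrow> nat" and P W :: "nat \<Rightarrow> real"
    and \<gamma> :: "nat \<Rightarrow> nat \<Rightarrow> complex" and \<beta> \<theta> :: "nat \<Rightarrow> nat \<Rightarrow> real"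
begin

definition user_cov :: "nat \<Rightarrow> complex mat \<Rightarrow> real vec \<Rightarrow> complex mat" where
  "user_cov v Q x = chan M lam (N v) (L v) (\<gamma> v) (\<beta> v) (\<theta> v) x * Q
     * herm (chan M lam (N v) (L v) (\<gamma> v) (\<beta> v) (\<theta> v) x)"

definition rx_cov :: "nat set \<Rightarrow> (nat \<Rightarrow> complex mat) \<Rightarrow> (nat \<Rightarrow> real vec) \<Rightarrow> complex mat" where
  "rx_cov S Q w = msum M S (\<lambda>v. user_cov v (Q v) (w v))"

definition feasible :: "nat set \<Rightarrow> (nat \<Rightarrow> complex mat) \<Rightarrow> (nat \<Rightarrow> real vec) \<Rightarrow> bool" where
  "feasible S Q w \<longleftrightarrow> (\<forall>v\<in>S. cov_ok (N v) (P v) (Q v) \<and> pos_ok (N v) (W v) (w v))"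

definition full_power_cov :: "nat \<Rightarrow> complex mat" where
  "full_power_cov u = complex_of_real (real M * real (N u) * P u * (cmod (\<gamma> u 0))\<^sup>2)
     \<cdot>\<^sub>m (aR M lam (\<beta> u 0) * herm (aR M lam (\<beta> u 0)))"

lemma feasible_subset: "feasible S Q w \<Longrightarrow> T \<subseteq> S \<Longrightarrow> feasible T Q w"
  unfolding feasible_def by blast

lemma user_cov_psd: "psd (N v) Q \<Longrightarrow> psd M (user_cov v Q x)"
  unfolding user_cov_def by (rule psd_congruence[OF chan_carrier])

lemma rx_cov_psd: "finite S \<Longrightarrow> feasible S Q w \<Longrightarrow> psd M (rx_cov S Q w)"
  unfolding rx_cov_def feasible_def cov_ok_def by (auto intro!: psd_msum user_cov_psd)

lemma rx_cov_remove:
  assumes "finite S" "u \<in> S" "feasible S Q w"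
  shows "rx_cov S Q w = rx_cov (S - {u}) Q w + user_cov u (Q u) (w u)"
  unfolding rx_cov_def using assms
  by (intro msum_remove) (auto simp: feasible_def cov_ok_def intro: psd_carrier user_cov_psd)

lemma user_cov_single_path:
  assumes "L u = 1" "psd (N u) Q"
  shows "user_cov u Q x = complex_of_real (real M * real (N u) * (cmod (\<gamma> u 0))\<^sup>2
      * Re (quad_form (N u) Q (\<lambda>k. AT (N u) lam 1 (\<theta> u) x $$ (k,0))))
    \<cdot>\<^sub>m (aR M lam (\<beta> u 0) * herm (aR M lam (\<beta> u 0)))"
proof -
  have "quad_form (N u) Q (\<lambda>k. AT (N u) lam 1 (\<theta> u) x $$ (k,0))
      = complex_of_real (Re (quad_form (N u) Q (\<lambda>k. AT (N u) lam 1 (\<theta> u) x $$ (k,0))))"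
    using quad_form_real[OF assms(2)] by (simp add: complex_eq_iff)
  then show ?thesis
    unfolding user_cov_def using chan_single_path_gram[OF psd_carrier[OF assms(2)]] assms(1) by simp
qed

lemma ln_det_le_full_power:
  assumes "L u = 1" "1 \<le> N u" "finite S" "u \<in> S" "feasible S Q w"
  shows "ln (Re (det (rx_cov S Q w + 1\<^sub>m M)))
    \<le> ln (Re (det (rx_cov (S - {u}) Q w + full_power_cov u + 1\<^sub>m M)))"
proof -
  define c where "c = real M * real (N u) * (cmod (\<gamma> u 0))\<^sup>2"
  define s where "s = Re (quad_form (N u) (Q u) (\<lambda>k. AT (N u) lam 1 (\<theta> u) (w u) $$ (k,0)))"
  define a where "a i = aR M lam (\<beta> u 0) $$ (i,0)" for i
  define R where "R = mat M M (\<lambda>(i,j). a i * cnj (a j))"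
  have Qu: "psd (N u) (Q u)" "Re (mtrace (Q u)) \<le> P u"
    using assms(4,5) unfolding feasible_def cov_ok_def by auto
  have "0 \<le> s"
    using Qu(1) unfolding s_def psd_iff_quad_form by blast
  moreover have "s \<le> P u"
    using quad_form_le_trace[OF Qu(1) AT_column_norm[of 0 1 "N u" lam "\<theta> u" "w u", OF _ assms(2)]] Qu(2)
    unfolding s_def by simp
  ultimately have "0 \<le> c * s" "c * s \<le> c * P u"
    unfolding c_def by (simp_all add: mult_left_mono)
  moreover have "psd M (rx_cov (S - {u}) Q w)"
    using assms(3,5) by (auto intro: rx_cov_psd feasible_subset)
  ultimately have "0 < Re (det (rx_cov (S - {u}) Q w + complex_of_real (c * s) \<cdot>\<^sub>m R + 1\<^sub>m M))"
    "Re (det (rx_cov (S - {u}) Q w + complex_of_real (c * s) \<cdot>\<^sub>m R + 1\<^sub>m M))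
      \<le> Re (det (rx_cov (S - {u}) Q w + complex_of_real (c * P u) \<cdot>\<^sub>m R + 1\<^sub>m M))"
    unfolding R_def using det_rank1_update_mono by blast+
  moreover have "rx_cov S Q w = rx_cov (S - {u}) Q w + complex_of_real (c * s) \<cdot>\<^sub>m R"
    using rx_cov_remove[OF assms(3-5)] user_cov_single_path[OF assms(1) Qu(1)]
    unfolding c_def s_def R_def a_def aR_outer by simp
  moreover have "full_power_cov u = complex_of_real (c * P u) \<cdot>\<^sub>m R"
    unfolding full_power_cov_def c_def R_def a_def aR_outer by (simp add: mult_ac)
  ultimately show ?thesis
    by simp
qed

lemma full_power_attained:
  assumes "L u = 1" "1 \<le> N u" "0 \<le> P u" "0 < W u" "finite S" "u \<in> S" "feasible (S - {u}) Q w"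
  obtains Q' w' where "feasible S Q' w'" "rx_cov S Q' w' = rx_cov (S - {u}) Q w + full_power_cov u"
proof -
  define x where "x = vec (N u) (\<lambda>n. W u * real n / real (N u))"
  define t where "t k = AT (N u) lam 1 (\<theta> u) x $$ (k,0)" for k
  \<comment> \<open>beamforming along the transmit steering vector attains \<open>t\<^sup>H Q t = P u\<close>\<close>
  define Qu where "Qu = complex_of_real (P u) \<cdot>\<^sub>m mat (N u) (N u) (\<lambda>(i,j). t i * cnj (t j))"
  have norm: "(\<Sum>k<N u. t k * cnj (t k)) = 1"
    using arg_cong[OF AT_column_norm[of 0 1 "N u" lam "\<theta> u" x, OF _ assms(2)], of complex_of_real]
    unfolding t_def by (simp flip: complex_norm_square)
  have Qu_psd: "psd (N u) Qu"
    unfolding Qu_def using assms(3) by (intro psd_smult psd_outer)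
  have "mtrace Qu = complex_of_real (P u)"
    unfolding mtrace_def Qu_def by (simp add: sum_distrib_left[symmetric] norm)
  then have Qu_ok: "cov_ok (N u) (P u) Qu"
    unfolding cov_ok_def using Qu_psd by simp
  have "quad_form (N u) Qu t = (\<Sum>k<N u. \<Sum>l<N u. complex_of_real (P u) * ((t k * cnj (t k)) * (t l * cnj (t l))))"
    unfolding quad_form_def Qu_def by (intro sum.cong refl) (simp add: mult_ac)
  also have "\<dots> = complex_of_real (P u) * ((\<Sum>k<N u. t k * cnj (t k)) * (\<Sum>l<N u. t l * cnj (t l)))"
    unfolding sum_product by (simp only: sum_distrib_left)
  finally have "Re (quad_form (N u) Qu t) = P u"
    by (simp add: norm)
  then have Qu_cov: "user_cov u Qu x = full_power_cov u"
    unfolding full_power_cov_def user_cov_single_path[OF assms(1) Qu_psd] t_def by (simp add: mult_ac)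
  define Q' where "Q' = Q(u := Qu)"
  define w' where "w' = w(u := x)"
  have feasible': "feasible S Q' w'"
    using assms(7) Qu_ok pos_ok_uniform[OF assms(4,2)]
    unfolding feasible_def Q'_def w'_def x_def by auto
  have "rx_cov (S - {u}) Q' w' = rx_cov (S - {u}) Q w"
    unfolding rx_cov_def Q'_def w'_def using assms(5) by (intro msum_cong) auto
  then have "rx_cov S Q' w' = rx_cov (S - {u}) Q w + full_power_cov u"
    using rx_cov_remove[OF assms(5,6) feasible'] Qu_cov unfolding Q'_def w'_def by simp
  with feasible' show ?thesis
    using that by blast
qed

theorem Sup_ln_det_eq_full_power:
  assumes "L u = 1" "1 \<le> N u" "0 \<le> P u" "0 < W u" "finite S" "u \<in> S"
  shows "Sup {ln (Re (det (rx_cov S Q w + 1\<^sub>m M))) | Q w. feasible S Q w}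
    = Sup {ln (Re (det (rx_cov (S - {u}) Q w + full_power_cov u + 1\<^sub>m M))) | Q w. feasible (S - {u}) Q w}"
    (is "Sup ?full = Sup ?reduced")
proof (rule Sup_eq_if_mutually_dominated)
  fix r assume "r \<in> ?full"
  then obtain Q w where "r = ln (Re (det (rx_cov S Q w + 1\<^sub>m M)))" "feasible S Q w"
    by blast
  then show "\<exists>r'\<in>?reduced. r \<le> r'"
    using ln_det_le_full_power[OF assms(1,2,5,6)] feasible_subset[of S Q w "S - {u}"] by blast
next
  fix r assume "r \<in> ?reduced"
  then obtain Q w where r: "r = ln (Re (det (rx_cov (S - {u}) Q w + full_power_cov u + 1\<^sub>m M)))"
    and "feasible (S - {u}) Q w"
    by blast
  then obtain Q' w' where "feasible S Q' w'" "rx_cov S Q' w' = rx_cov (S - {u}) Q w + full_power_cov u"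
    using full_power_attained[OF assms] by blast
  then show "\<exists>r'\<in>?full. r \<le> r'"
    unfolding r by force
qed

end

theorem lemma1:
  fixes U M :: nat and lam :: real
    and N L :: "nat \<Rightarrow> nat" and P W :: "nat \<Rightarrow> real"
    and \<gamma> :: "nat \<Rightarrow> nat \<Rightarrow> complex" and \<beta> \<theta> :: "nat \<Rightarrow> nat \<Rightarrow> real"
    and u :: nat
  assumes "M \<ge> 1" and "lam > 0"
    and "\<And>v. v \<in> {1..U} \<Longrightarrow> N v \<ge> 1"
    and "\<And>v. v \<in> {1..U} \<Longrightarrow> L v \<ge> 1"
    and "\<And>v. v \<in> {1..U} \<Longrightarrow> P v > 0"
    and "\<And>v. v \<in> {1..U} \<Longrightarrow> W v > 0"
    and "\<And>v l. v \<in> {1..U} \<Longrightarrow> l < L v \<Longrightarrow> 0 \<le> \<beta> v l \<and> \<beta> v l \<le> pi"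
    and "\<And>v l. v \<in> {1..U} \<Longrightarrow> l < L v \<Longrightarrow> 0 \<le> \<theta> v l \<and> \<theta> v l \<le> pi"
    and "u \<in> {1..U}" and "L u = 1"
  shows
   "Sup {ln (Re (det (msum M {1..U}
            (\<lambda>v. chan M lam (N v) (L v) (\<gamma> v) (\<beta> v) (\<theta> v) (w v) * Q v
                 * herm (chan M lam (N v) (L v) (\<gamma> v) (\<beta> v) (\<theta> v) (w v)))
           + 1\<^sub>m M)))
        | Q w. \<forall>v \<in> {1..U}. cov_ok (N v) (P v) (Q v) \<and> pos_ok (N v) (W v) (w v)}
  = Sup {ln (Re (det (msum M ({1..U} - {u})
            (\<lambda>v. chan M lam (N v) (L v) (\<gamma> v) (\<beta> v) (\<theta> v) (w v) * Q v
                 * herm (chan M lam (N v) (L v) (\<gamma> v) (\<beta> v) (\<theta> v) (w v)))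
           + complex_of_real (real M * real (N u) * P u * (cmod (\<gamma> u 0))\<^sup>2)
               \<cdot>\<^sub>m (aR M lam (\<beta> u 0) * herm (aR M lam (\<beta> u 0)))
           + 1\<^sub>m M)))
        | Q w. \<forall>v \<in> {1..U} - {u}. cov_ok (N v) (P v) (Q v) \<and> pos_ok (N v) (W v) (w v)}"
proof -
  \<comment> \<open>only the hypotheses on user \<open>u\<close> are needed\<close>
  interpret uplink M lam N L P W \<gamma> \<beta> \<theta> .
  have "1 \<le> N u" "0 \<le> P u" "0 < W u"
    using assms(3,5,6,9) by (auto intro: less_imp_le)
  from Sup_ln_det_eq_full_power[OF \<open>L u = 1\<close> this finite_atLeastAtMost \<open>u \<in> {1..U}\<close>]
  show ?thesis
    unfolding rx_cov_def user_cov_def feasible_def full_power_cov_def .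
qed

end
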